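(* Let $T(p)=\exp(-(-\ln p)^\alpha)$ for $p\in[0,1]$ with parameter $\alpha>0$, $\alpha\ne1$, and let $\tilde T(p):=1-T(1-p)=1-\exp(-(-\ln(1-p))^\alpha)$. (1) If $\alpha>1$ (so $T$ is S-shaped), then $p^*(\alpha):=\inf\{p\in[0,1):\tilde T'(p)\ge\frac{1-\tilde T(p)}{1-p}\}$ equals $p^*(\alpha)=1-\exp\big(-\alpha^{-\frac{1}{\alpha-1}}\big)$. (2) If $\alpha<1$ (so $T$ is inverse S-shaped), then $p^*(\alpha):=\sup\{p\in[0,1):\tilde T'(p)\le\tilde T(p)/p\}$ equals $p^*(\alpha)=1-\exp(-x)$, where $x$ is the unique solution of $$x=\Big(\ln\big(\alpha x^{\alpha-1}e^x(1-e^{-x})+1\big)\Big)^{1/\alpha}.$$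
   Context: $T$ is the Prelec probability weighting function with parameter $\alpha$. *)

theory Defs
  imports "HOL-Analysis.Analysis"
begin

definition prelecT :: "real \<Rightarrow> real \<Rightarrow> real" where
  "prelecT \<alpha> p = exp (- ((- ln p) powr \<alpha>))"

definition prelecTt :: "real \<Rightarrow> real \<Rightarrow> real" where
  "prelecTt \<alpha> p = 1 - prelecT \<alpha> (1 - p)"

text \<open>Derivative of Ttilde at p, taken within the domain [0,1) (one-sided at p = 0).
  The predicates below require the derivative to exist.\<close>
definition pstar_S :: "real \<Rightarrow> real" where
  "pstar_S \<alpha> = Inf {p \<in> {0..<1}. \<exists>D. (prelecTt \<alpha> has_real_derivative D) (at p within {0..<1})
        \<and> D \<ge> (1 - prelecTt \<alpha> p) / (1 - p)}"

definition pstar_IS :: "real \<Rightarrow> real" where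
  "pstar_IS \<alpha> = Sup {p \<in> {0..<1}. \<exists>D. (prelecTt \<alpha> has_real_derivative D) (at p within {0..<1})
        \<and> D \<le> prelecTt \<alpha> p / p}"

end

theory Submission
  imports Defs "HOL-Real_Asymp.Real_Asymp"
begin

text \<open>In the coordinate y = -ln(1 - p) one has Ttilde(p) = 1 - exp(-y^alpha) and
   Ttilde'(p) = alpha y^(alpha-1) exp(y - y^alpha).  For alpha > 1 the condition
   Ttilde'(p) >= (1 - Ttilde(p))/(1 - p) becomes alpha y^(alpha-1) >= 1, i.e.
   y >= alpha^(-1/(alpha-1)), while p = 0 fails it because Ttilde'(0) = 0.
   For alpha < 1 the condition p Ttilde'(p) <= Ttilde(p) becomes K(y) <= 0 for the
   function K = chord_gap.  K tends to 0 at 0, decreases on (0,1], increases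
   on [1,oo) and is unbounded, so it is negative on (0,1] and has a unique positive
   zero z; K <= 0 exactly on (0,z], and K(z) = 0 is the fixed-point equation.\<close>

lemma unit_interval_exp_coordinate:
  fixes p :: real
  assumes "0 < p" "p < 1"
  obtains y where "0 < y" "p = 1 - exp (- y)"
proof
  show "0 < - ln (1 - p)" using assms by simp
  show "p = 1 - exp (- (- ln (1 - p)))" using assms by simp
qed

lemma prelecTt_exp_minus: "prelecTt a (1 - exp (- y)) = 1 - exp (- (y powr a))"
  by (simp add: prelecTt_def prelecT_def)

lemma prelecTt_has_real_derivative:
  assumes "0 < y"
  shows "(prelecTt a has_real_derivative a * y powr (a - 1) * exp (y - y powr a)) (at (1 - exp (- y)))"
proof -
  have "(prelecTt a has_real_derivative
          exp (- ((- ln (1 - p)) powr a)) * (a * (- ln (1 - p)) powr (a - 1)) / (1 - p)) (at p)"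
    if "0 < p" "p < 1" for p
    unfolding prelecTt_def[abs_def] prelecT_def
    using that by (auto intro!: derivative_eq_intros)
  from this[of "1 - exp (- y)"] have
    "(prelecTt a has_real_derivative exp (- (y powr a)) * (a * y powr (a - 1)) / exp (- y))
       (at (1 - exp (- y)))"
    using assms by simp
  moreover have "exp (- (y powr a)) * (a * y powr (a - 1)) / exp (- y)
      = a * y powr (a - 1) * exp (y - y powr a)"
    by (simp add: exp_diff exp_minus field_simps)
  ultimately show ?thesis
    by simp
qed

lemma prelecTt_derivative_within_iff:
  assumes "0 < y"
  shows "(prelecTt a has_real_derivative D) (at (1 - exp (- y)) within {0..<1})
    \<longleftrightarrow> D = a * y powr (a - 1) * exp (y - y powr a)"
proof -
  have "at (1 - exp (- y)) within {0..<1} = at (1 - exp (- y))"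
    by (rule at_within_open_subset[of _ "{0<..<1}"]) (use assms in auto)
  then show ?thesis
    using prelecTt_has_real_derivative[OF assms] DERIV_unique by metis
qed

lemma prelecTt_derivative_at_0:
  assumes "1 < a" "(prelecTt a has_real_derivative D) (at 0 within {0..<1})"
  shows "D = 0"
proof -
  have "at (0::real) within {0..<1} = at 0 within {0..1}"
    by (rule at_within_nhd[of _ "{-1<..<1}"]) auto
  also have "\<dots> = at_right 0"
    by (rule at_within_Icc_at_right) simp
  finally have "((\<lambda>p. prelecTt a p / p) \<longlongrightarrow> D) (at_right 0)"
    using assms(2) by (simp add: has_field_derivative_iff prelecTt_def prelecT_def)
  moreover have "((\<lambda>p. prelecTt a p / p) \<longlongrightarrow> 0) (at_right 0)"
    unfolding prelecTt_def prelecT_def using assms(1) by real_asymp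
  ultimately show ?thesis
    using tendsto_unique by force
qed

lemma one_le_mul_powr_iff:
  fixes a y :: real
  assumes "1 < a" "0 < y"
  shows "1 \<le> a * y powr (a - 1) \<longleftrightarrow> a powr (- 1 / (a - 1)) \<le> y"
proof -
  have "1 \<le> a * y powr (a - 1) \<longleftrightarrow> 0 \<le> ln (a * y powr (a - 1))"
    using assms by simp
  also have "\<dots> \<longleftrightarrow> - (ln a / (a - 1)) \<le> ln y"
    using assms by (simp add: ln_mult ln_powr field_simps)
  also have "- (ln a / (a - 1)) = ln (a powr (- 1 / (a - 1)))"
    using assms by (simp add: ln_powr)
  also have "ln (a powr (- 1 / (a - 1))) \<le> ln y \<longleftrightarrow> a powr (- 1 / (a - 1)) \<le> y"
    by (rule ln_le_cancel_iff) (use assms in auto)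
  finally show ?thesis .
qed

lemma pstar_S_condition_iff:
  assumes "1 < a" "0 < y" "p = 1 - exp (- y)"
  shows "(\<exists>D. (prelecTt a has_real_derivative D) (at p within {0..<1})
      \<and> D \<ge> (1 - prelecTt a p) / (1 - p)) \<longleftrightarrow> 1 - exp (- (a powr (- 1 / (a - 1)))) \<le> p"
proof -
  have "(1 - prelecTt a p) / (1 - p) = exp (y - y powr a)"
    unfolding assms(3) prelecTt_exp_minus by (simp add: exp_diff exp_minus field_simps)
  then have "(\<exists>D. (prelecTt a has_real_derivative D) (at p within {0..<1})
      \<and> D \<ge> (1 - prelecTt a p) / (1 - p)) \<longleftrightarrow>
      exp (y - y powr a) \<le> a * y powr (a - 1) * exp (y - y powr a)"
    using prelecTt_derivative_within_iff[OF assms(2)] assms(3) by simp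
  also have "\<dots> \<longleftrightarrow> a powr (- 1 / (a - 1)) \<le> y"
    using one_le_mul_powr_iff[OF assms(1,2)] by simp
  also have "\<dots> \<longleftrightarrow> 1 - exp (- (a powr (- 1 / (a - 1)))) \<le> p"
    using assms(3) by simp
  finally show ?thesis .
qed

lemma pstar_S_condition_fails_at_0:
  assumes "1 < a"
  shows "\<not> (\<exists>D. (prelecTt a has_real_derivative D) (at 0 within {0..<1})
      \<and> D \<ge> (1 - prelecTt a 0) / (1 - 0))"
proof
  assume "\<exists>D. (prelecTt a has_real_derivative D) (at 0 within {0..<1})
      \<and> D \<ge> (1 - prelecTt a 0) / (1 - 0)"
  then obtain D where D: "(prelecTt a has_real_derivative D) (at 0 within {0..<1})"
    and le: "(1 - prelecTt a 0) / (1 - 0) \<le> D"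
    by blast
  from D have "D = 0"
    by (rule prelecTt_derivative_at_0[OF assms])
  moreover have "(1 - prelecTt a 0) / (1 - 0) = 1"
    by (simp add: prelecTt_def prelecT_def)
  ultimately show False
    using le by simp
qed

lemma pstar_S_eq:
  assumes "1 < a"
  shows "pstar_S a = 1 - exp (- (a powr (- 1 / (a - 1))))"
proof -
  define p0 where "p0 = 1 - exp (- (a powr (- 1 / (a - 1))))"
  have "0 < p0" "p0 < 1"
    unfolding p0_def using assms by simp_all
  have "p \<in> {p \<in> {0..<1}. \<exists>D. (prelecTt a has_real_derivative D) (at p within {0..<1})
        \<and> D \<ge> (1 - prelecTt a p) / (1 - p)} \<longleftrightarrow> p \<in> {p0..<1}" for p
  proof (cases "0 < p \<and> p < 1")
    case True
    then obtain y where "0 < y" "p = 1 - exp (- y)"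
      using unit_interval_exp_coordinate by blast
    then show ?thesis
      using pstar_S_condition_iff[OF assms \<open>0 < y\<close> \<open>p = 1 - exp (- y)\<close>] True
      unfolding p0_def by auto
  next
    case False
    then have "p \<notin> {p0..<1}"
      using \<open>0 < p0\<close> by auto
    moreover have "p = 0" if "p \<in> {0..<1}"
      using False that by simp
    ultimately show ?thesis
      using pstar_S_condition_fails_at_0[OF assms] by blast
  qed
  then have "{p \<in> {0..<1}. \<exists>D. (prelecTt a has_real_derivative D) (at p within {0..<1})
        \<and> D \<ge> (1 - prelecTt a p) / (1 - p)} = {p0..<1}"
    by blast
  then show ?thesis
    unfolding pstar_S_def p0_def[symmetric] using \<open>p0 < 1\<close> by simp
qed

text \<open>\<open>chord_gap a y\<close> is \<open>p Ttilde'(p) - Ttilde(p)\<close> at \<open>p = 1 - exp (- y)\<close>.\<close>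

definition chord_gap :: "real \<Rightarrow> real \<Rightarrow> real" where
  "chord_gap a y = (1 - exp (- y)) * (a * y powr (a - 1) * exp (y - y powr a)) - (1 - exp (- (y powr a)))"

lemma has_real_derivative_chord_gap:
  assumes "0 < y"
  shows "(chord_gap a has_real_derivative
      (1 - exp (- y)) * a * exp (y - y powr a) * y powr (a - 2) * (a - 1 + y - a * y powr a)) (at y)"
proof -
  have "y powr (a - 1) = y powr (a - 2) * y" "y powr a = y powr (a - 1) * y"
    using powr_add[of y "a - 2" 1] powr_add[of y "a - 1" 1] assms by simp_all
  moreover have "exp (- (y powr a)) = exp (- y) * exp (y - y powr a)"
    by (simp flip: exp_add)
  \<comment> \<open>the product-rule terms coming from \<open>exp (- y)\<close> and \<open>exp (- (y powr a))\<close> cancel\<close>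
  ultimately have "exp (- y) * (a * y powr (a - 1) * exp (y - y powr a)) +
      ((a - 1) * y powr (a - 2) * a * exp (y - y powr a) +
        exp (y - y powr a) * (1 - a * y powr (a - 1)) * (a * y powr (a - 1))) * (1 - exp (- y)) -
      exp (- (y powr a)) * (a * y powr (a - 1))
    = (1 - exp (- y)) * a * exp (y - y powr a) * y powr (a - 2) * (a - 1 + y - a * y powr a)"
    by algebra
  moreover have "(chord_gap a has_real_derivative
      exp (- y) * (a * y powr (a - 1) * exp (y - y powr a)) +
      ((a - 1) * y powr (a - 2) * a * exp (y - y powr a) +
        exp (y - y powr a) * (1 - a * y powr (a - 1)) * (a * y powr (a - 1))) * (1 - exp (- y)) -
      exp (- (y powr a)) * (a * y powr (a - 1))) (at y)"
    unfolding chord_gap_def[abs_def]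
    using assms by - (rule derivative_eq_intros refl | simp)+
  ultimately show ?thesis
    by simp
qed

lemma concave_powr_gap_neg:
  fixes a y :: real
  assumes "0 < a" "a < 1" "0 < y" "y < 1"
  shows "a - 1 + y - a * y powr a < 0"
proof -
  have "y < y powr a"
    using powr_less_mono'[of y a 1] assms by simp
  then have "a * (y - y powr a) < 0"
    using assms by (simp add: mult_pos_neg)
  moreover have "(1 - a) * (y - 1) < 0"
    using assms by (simp add: mult_pos_neg)
  ultimately show ?thesis
    by (simp add: algebra_simps)
qed

lemma concave_powr_gap_pos:
  fixes a y :: real
  assumes "0 < a" "a < 1" "1 < y"
  shows "0 < a - 1 + y - a * y powr a"
proof -
  have "y powr a < y"
    using powr_less_mono[of a 1 y] assms by simp
  then have "0 < a * (y - y powr a)"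
    using assms by simp
  moreover have "0 < (1 - a) * (y - 1)"
    using assms by simp
  ultimately show ?thesis
    by (simp add: algebra_simps)
qed

lemma continuous_on_chord_gap: "0 < u \<Longrightarrow> continuous_on {u..v} (chord_gap a)"
  by (intro continuous_at_imp_continuous_on ballI DERIV_isCont[OF has_real_derivative_chord_gap]) auto

lemma chord_gap_strict_antimono:
  assumes "0 < a" "a < 1" "0 < u" "u < v" "v \<le> 1"
  shows "chord_gap a v < chord_gap a u"
proof (rule DERIV_neg_imp_decreasing_open[OF \<open>u < v\<close> _ continuous_on_chord_gap[OF \<open>0 < u\<close>]])
  fix y
  assume "u < y" "y < v"
  with assms have "(1 - exp (- y)) * a * exp (y - y powr a) * y powr (a - 2) * (a - 1 + y - a * y powr a) < 0"
    using concave_powr_gap_neg[of a y] by (simp add: mult_pos_neg)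
  then show "\<exists>D. (chord_gap a has_real_derivative D) (at y) \<and> D < 0"
    using has_real_derivative_chord_gap[of y a] \<open>u < y\<close> assms by auto
qed

lemma chord_gap_strict_mono:
  assumes "0 < a" "a < 1" "1 \<le> u" "u < v"
  shows "chord_gap a u < chord_gap a v"
proof (rule DERIV_pos_imp_increasing_open[OF \<open>u < v\<close> _ continuous_on_chord_gap])
  fix y
  assume "u < y" "y < v"
  with assms have "0 < (1 - exp (- y)) * a * exp (y - y powr a) * y powr (a - 2) * (a - 1 + y - a * y powr a)"
    using concave_powr_gap_pos[of a y] by simp
  then show "\<exists>D. (chord_gap a has_real_derivative D) (at y) \<and> 0 < D"
    using has_real_derivative_chord_gap[of y a] \<open>u < y\<close> assms by auto
qed (use assms in simp)

lemma chord_gap_tendsto_0: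
  assumes "0 < a" "a < 1"
  shows "(chord_gap a \<longlongrightarrow> 0) (at_right 0)"
proof -
  have "((\<lambda>y::real. (1 - exp (- y)) * y powr (a - 1)) \<longlongrightarrow> 0) (at_right 0)"
    using assms by real_asymp
  moreover have "((\<lambda>y::real. y powr a) \<longlongrightarrow> 0) (at_right 0)"
    using assms by real_asymp
  ultimately have "((\<lambda>y. (1 - exp (- y)) * y powr (a - 1) * (a * exp (y - y powr a))
      - (1 - exp (- (y powr a)))) \<longlongrightarrow> 0 * (a * exp (0 - 0)) - (1 - exp (- 0))) (at_right 0)"
    by (intro tendsto_intros) auto
  then show ?thesis
    unfolding chord_gap_def[abs_def] by (simp add: ac_simps)
qed

lemma chord_gap_tendsto_at_top:
  assumes "0 < a" "a < 1"
  shows "filterlim (chord_gap a) at_top at_top"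
  unfolding chord_gap_def[abs_def] using assms by real_asymp

lemma chord_gap_neg:
  assumes "0 < a" "a < 1" "0 < y" "y \<le> 1"
  shows "chord_gap a y < 0"
proof -
  have "chord_gap a (y / 2) \<le> 0"
  proof (rule tendsto_lowerbound[OF chord_gap_tendsto_0[OF assms(1,2)]])
    show "\<forall>\<^sub>F t in at_right 0. chord_gap a (y / 2) \<le> chord_gap a t"
      unfolding eventually_at_right[of 0 "y / 2", OF half_gt_zero[OF assms(3)]]
      using assms by (auto intro!: exI[of _ "y / 2"] less_imp_le chord_gap_strict_antimono)
  qed simp
  moreover have "chord_gap a y < chord_gap a (y / 2)"
    using chord_gap_strict_antimono[of a "y / 2" y] assms by simp
  ultimately show ?thesis
    by simp
qed

lemma chord_gap_unique_zero:
  assumes "0 < a" "a < 1"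
  obtains z where "1 < z"
    "\<And>y. 0 < y \<Longrightarrow> chord_gap a y \<le> 0 \<longleftrightarrow> y \<le> z"
    "\<And>y. 0 < y \<Longrightarrow> chord_gap a y = 0 \<longleftrightarrow> y = z"
proof -
  obtain Y where Y: "\<And>y. Y \<le> y \<Longrightarrow> 0 \<le> chord_gap a y"
    using chord_gap_tendsto_at_top[OF assms] by (auto simp: filterlim_at_top eventually_at_top_linorder)
  have neg1: "chord_gap a 1 < 0"
    using chord_gap_neg[OF assms] by simp
  obtain z where z: "1 \<le> z" "chord_gap a z = 0"
    using IVT'[of "chord_gap a" 1 0 "max Y 1"] neg1 Y[of "max Y 1"] continuous_on_chord_gap[of 1 "max Y 1" a]
    by auto
  with neg1 have "1 < z"
    by (cases "z = 1") auto
  have sign: "chord_gap a y < 0 \<longleftrightarrow> y < z" "chord_gap a y = 0 \<longleftrightarrow> y = z" if "0 < y" for y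
  proof -
    consider "y \<le> 1" | "1 < y" "y < z" | "y = z" | "z < y"
      by linarith
    then have "(chord_gap a y < 0 \<and> y < z) \<or> (chord_gap a y = 0 \<and> y = z) \<or> (0 < chord_gap a y \<and> z < y)"
    proof cases
      case 1
      then show ?thesis
        using chord_gap_neg[OF assms \<open>0 < y\<close>] \<open>1 < z\<close> by auto
    next
      case 2
      then show ?thesis
        using chord_gap_strict_mono[OF assms, of y z] z by auto
    next
      case 3
      then show ?thesis
        using z by simp
    next
      case 4
      then show ?thesis
        using chord_gap_strict_mono[OF assms, of z y] z by auto
    qed
    then show "chord_gap a y < 0 \<longleftrightarrow> y < z" "chord_gap a y = 0 \<longleftrightarrow> y = z"
      by auto
  qed
  show ?thesis
  proof
    show "chord_gap a y \<le> 0 \<longleftrightarrow> y \<le> z" if "0 < y" for y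
      using sign[OF that] by linarith
  qed (use \<open>1 < z\<close> sign in auto)
qed

lemma fixpoint_equation_iff_chord_gap_zero:
  fixes a x :: real
  assumes "0 < a" "0 < x"
  shows "x = (ln (a * x powr (a - 1) * exp x * (1 - exp (- x)) + 1)) powr (1 / a)
    \<longleftrightarrow> chord_gap a x = 0"
proof -
  define h where "h = a * x powr (a - 1) * exp x * (1 - exp (- x))"
  have "0 < h"
    unfolding h_def using assms by simp
  have "chord_gap a x = exp (- (x powr a)) * (h + 1) - 1"
    unfolding chord_gap_def h_def by (simp add: exp_diff exp_minus field_simps)
  then have "chord_gap a x = 0 \<longleftrightarrow> h + 1 = exp (x powr a)"
    by (auto simp: exp_minus field_simps)
  also have "\<dots> \<longleftrightarrow> ln (h + 1) = x powr a"
    using \<open>0 < h\<close> by (metis exp_ln ln_exp add_pos_pos zero_less_one)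
  also have "\<dots> \<longleftrightarrow> x = ln (h + 1) powr (1 / a)"
  proof
    assume "ln (h + 1) = x powr a"
    then show "x = ln (h + 1) powr (1 / a)"
      using assms by (simp add: powr_powr)
  next
    assume "x = ln (h + 1) powr (1 / a)"
    then have "x powr a = ln (h + 1)"
      using \<open>0 < h\<close> assms by (simp add: powr_powr)
    then show "ln (h + 1) = x powr a" ..
  qed
  finally show ?thesis
    unfolding h_def by auto
qed

lemma fixpoint_equation_solution_iff:
  fixes a z :: real
  assumes "0 < a" "0 < z" and zero_iff: "\<And>y. 0 < y \<Longrightarrow> chord_gap a y = 0 \<longleftrightarrow> y = z"
  shows "x > 0 \<and> x = (ln (a * x powr (a - 1) * exp x * (1 - exp (- x)) + 1)) powr (1 / a)
    \<longleftrightarrow> x = z"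
proof
  \<comment> \<open>\<open>x\<close> occurs on both sides of the equation, which makes the simplifier loop on it\<close>
  assume "x > 0 \<and> x = (ln (a * x powr (a - 1) * exp x * (1 - exp (- x)) + 1)) powr (1 / a)"
  then obtain "0 < x"
    and eq: "x = (ln (a * x powr (a - 1) * exp x * (1 - exp (- x)) + 1)) powr (1 / a)"
    by (rule conjE)
  from eq have "chord_gap a x = 0"
    by (rule iffD1[OF fixpoint_equation_iff_chord_gap_zero[OF \<open>0 < a\<close> \<open>0 < x\<close>]])
  then show "x = z"
    by (rule iffD1[OF zero_iff[OF \<open>0 < x\<close>]])
next
  have "chord_gap a z = 0"
    using zero_iff[OF \<open>0 < z\<close>] by (rule iffD2) (rule refl)
  then have "z = (ln (a * z powr (a - 1) * exp z * (1 - exp (- z)) + 1)) powr (1 / a)"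
    by (rule iffD2[OF fixpoint_equation_iff_chord_gap_zero[OF \<open>0 < a\<close> \<open>0 < z\<close>]])
  moreover assume "x = z"
  ultimately show "x > 0 \<and> x = (ln (a * x powr (a - 1) * exp x * (1 - exp (- x)) + 1)) powr (1 / a)"
    using \<open>0 < z\<close> by (simp only:)
qed

lemma pstar_IS_condition_iff:
  assumes "0 < y" "p = 1 - exp (- y)"
    and gap_le: "\<And>y. 0 < y \<Longrightarrow> chord_gap a y \<le> 0 \<longleftrightarrow> y \<le> z"
  shows "(\<exists>D. (prelecTt a has_real_derivative D) (at p within {0..<1})
      \<and> D \<le> prelecTt a p / p) \<longleftrightarrow> p \<le> 1 - exp (- z)"
proof -
  have "0 < p"
    using assms(1,2) by simp
  have "(\<exists>D. (prelecTt a has_real_derivative D) (at p within {0..<1})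
      \<and> D \<le> prelecTt a p / p) \<longleftrightarrow>
      a * y powr (a - 1) * exp (y - y powr a) \<le> (1 - exp (- (y powr a))) / p"
    using prelecTt_derivative_within_iff[OF assms(1)] assms(2) prelecTt_exp_minus by simp
  also have "\<dots> \<longleftrightarrow> chord_gap a y \<le> 0"
    using \<open>0 < p\<close> unfolding chord_gap_def assms(2) by (simp add: le_divide_eq mult.commute)
  also have "\<dots> \<longleftrightarrow> p \<le> 1 - exp (- z)"
    using gap_le[OF assms(1)] assms(2) by simp
  finally show ?thesis .
qed

lemma pstar_IS_eq:
  assumes "0 < z" and gap_le: "\<And>y. 0 < y \<Longrightarrow> chord_gap a y \<le> 0 \<longleftrightarrow> y \<le> z"
  shows "pstar_IS a = 1 - exp (- z)"
  unfolding pstar_IS_def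
proof (rule cSup_eq_maximum)
  show "1 - exp (- z) \<in> {p \<in> {0..<1}. \<exists>D. (prelecTt a has_real_derivative D) (at p within {0..<1})
      \<and> D \<le> prelecTt a p / p}"
    using pstar_IS_condition_iff[OF \<open>0 < z\<close> refl gap_le] \<open>0 < z\<close> by simp
next
  fix p
  assume "p \<in> {p \<in> {0..<1}. \<exists>D. (prelecTt a has_real_derivative D) (at p within {0..<1})
      \<and> D \<le> prelecTt a p / p}"
  then obtain D where p: "0 \<le> p" "p < 1"
    and D: "(prelecTt a has_real_derivative D) (at p within {0..<1})" "D \<le> prelecTt a p / p"
    by auto
  show "p \<le> 1 - exp (- z)"
  proof (cases "p = 0")
    case True
    then show ?thesis
      using \<open>0 < z\<close> by simp
  next
    case False
    with p have "0 < p"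
      by simp
    then obtain y where "0 < y" "p = 1 - exp (- y)"
      using p(2) by (rule unit_interval_exp_coordinate)
    then show ?thesis
      using pstar_IS_condition_iff[of y p a z] gap_le D by blast
  qed
qed

theorem corollary4p3:
  fixes \<alpha> :: real
  assumes "\<alpha> > 0" and "\<alpha> \<noteq> 1"
  shows "(\<alpha> > 1 \<longrightarrow> pstar_S \<alpha> = 1 - exp (- (\<alpha> powr (- 1 / (\<alpha> - 1)))))
       \<and> (\<alpha> < 1 \<longrightarrow>
           (\<exists>!x::real. x > 0 \<and> x = (ln (\<alpha> * x powr (\<alpha> - 1) * exp x * (1 - exp (- x)) + 1)) powr (1 / \<alpha>))
         \<and> (\<forall>x::real. x > 0 \<and> x = (ln (\<alpha> * x powr (\<alpha> - 1) * exp x * (1 - exp (- x)) + 1)) powr (1 / \<alpha>)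
               \<longrightarrow> pstar_IS \<alpha> = 1 - exp (- x)))"
proof (intro conjI impI)
  show "pstar_S \<alpha> = 1 - exp (- (\<alpha> powr (- 1 / (\<alpha> - 1))))" if "1 < \<alpha>"
    using pstar_S_eq[OF that] .
next
  assume "\<alpha> < 1"
  then obtain z where z: "1 < z"
    "\<And>y. 0 < y \<Longrightarrow> chord_gap \<alpha> y \<le> 0 \<longleftrightarrow> y \<le> z"
    "\<And>y. 0 < y \<Longrightarrow> chord_gap \<alpha> y = 0 \<longleftrightarrow> y = z"
    using chord_gap_unique_zero \<open>0 < \<alpha>\<close> by blast
  then have "0 < z"
    by simp
  have fixpoint: "x > 0 \<and> x = (ln (\<alpha> * x powr (\<alpha> - 1) * exp x * (1 - exp (- x)) + 1)) powr (1 / \<alpha>)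
      \<longleftrightarrow> x = z" for x
    using \<open>0 < \<alpha>\<close> \<open>0 < z\<close> z(3) by (rule fixpoint_equation_solution_iff)
  show "\<exists>!x::real. x > 0 \<and> x = (ln (\<alpha> * x powr (\<alpha> - 1) * exp x * (1 - exp (- x)) + 1)) powr (1 / \<alpha>)"
    unfolding fixpoint by (rule ex1_eq(1))
  have "pstar_IS \<alpha> = 1 - exp (- z)"
    using \<open>0 < z\<close> z(2) by (rule pstar_IS_eq)
  moreover have "x = z"
    if "x > 0 \<and> x = (ln (\<alpha> * x powr (\<alpha> - 1) * exp x * (1 - exp (- x)) + 1)) powr (1 / \<alpha>)" for x
    using that by (rule fixpoint[THEN iffD1])
  ultimately show "\<forall>x::real. x > 0 \<and> x = (ln (\<alpha> * x powr (\<alpha> - 1) * exp x * (1 - exp (- x)) + 1)) powr (1 / \<alpha>)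
      \<longrightarrow> pstar_IS \<alpha> = 1 - exp (- x)"
    by blast
qed

end
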